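(* For all integers $m\geq0$ and all $x$ with $0<|x|<1/4$, \[ \sum_{n=0}^\infty\binom{2n}{n}\frac{O_n}{n+m+1}x^n=\frac{\sqrt{1-4x}}{2x}\bigl(\ln\sqrt{1-4x}-1\bigr)+\frac{0^m}{2x^{m+1}}+\frac{m}{4^mx^{m+1}}\sum_{j=0}^{m-1}(-1)^j\binom{m-1}{j}A_j(x), \] where \[ A_j(x)=\frac{(1-4x)^{j+3/2}}{2j+3}\Bigl(\ln\sqrt{1-4x}-\frac{2j+4}{2j+3}\Bigr)+\frac{2j+4}{(2j+3)^2}. \]
   Context: $O_n=\sum_{j=1}^n\frac1{2j-1}$ is the $n$th odd harmonic number ($O_0=0$). Convention: $0^0=1$ and $0^m=0$ for $m\ge1$; the sum over $j$ is empty (equal to $0$) when $m=0$. *)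

theory Defs
  imports Complex_Main
begin

definition odd_harmonic :: "nat \<Rightarrow> real" where
  "odd_harmonic n = (\<Sum>j=1..n. 1 / (2 * real j - 1))"

definition A_term :: "nat \<Rightarrow> real \<Rightarrow> real" where
  "A_term j x = (1 - 4*x) powr (real j + 3/2) / (2 * real j + 3)
      * (ln (sqrt (1 - 4*x)) - (2 * real j + 4) / (2 * real j + 3))
    + (2 * real j + 4) / (2 * real j + 3)^2"

end

theory Submission
  imports Defs
begin

(* The recurrence (n + 1) C(2n+2, n+1) = 2 (2n + 1) C(2n, n), and its odd harmonic variant, say that
   the power series B and F with coefficients C(2n, n) and C(2n, n) O_n solve the first-order ODEs
   (1 - 4y) B' = 2 B and (1 - 4y) F' = 2 F + 2 B. Since sqrt (1 - 4y) is an integrating factor,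
   B = 1 / sqrt (1 - 4y) and F = - ln (1 - 4y) / (2 sqrt (1 - 4y)).
   The series of the theorem, times x^(m+1), is the antiderivative of y^m F(y) vanishing at 0.
   An explicit antiderivative is found in the variable u = sqrt (1 - 4y): there
   y^(m-1) = ((1 - u^2) / 4)^(m-1) expands binomially, and A_j is a primitive of u^(2j+2) (ln u - 1). *)

lemma central_binomial_Suc:
  "Suc n * (2 * Suc n choose Suc n) = 2 * (2 * n + 1) * (2 * n choose n)"
proof -
  have "Suc (2 * n) choose n = Suc (2 * n) choose Suc n"
    using binomial_symmetric[of n "Suc (2 * n)"] by (simp add: Suc_diff_le)
  then have "Suc n * (2 * Suc n choose Suc n) = 2 * (Suc n * (Suc (2 * n) choose Suc n))"
    by simp
  also have "\<dots> = 2 * (Suc (2 * n) * (2 * n choose n))"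
    by (simp only: Suc_times_binomial)
  finally show ?thesis
    by simp
qed

lemma central_binomial_Suc_real:
  "real (Suc n) * real (2 * Suc n choose Suc n) = (4 * real n + 2) * real (2 * n choose n)"
  unfolding of_nat_mult[symmetric] central_binomial_Suc by (simp add: algebra_simps)

lemma central_binomial_le_four_pow: "2 * n choose n \<le> 4 ^ n"
  using binomial_le_pow2[of "2 * n" n] by (simp add: power_mult)

lemma odd_harmonic_0 [simp]: "odd_harmonic 0 = 0"
  by (simp add: odd_harmonic_def)

lemma odd_harmonic_Suc: "odd_harmonic (Suc n) = odd_harmonic n + 1 / (2 * real n + 1)"
  by (simp add: odd_harmonic_def)

lemma odd_harmonic_nonneg: "0 \<le> odd_harmonic n"
  unfolding odd_harmonic_def by (intro sum_nonneg) auto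

lemma odd_harmonic_le: "odd_harmonic n \<le> real n"
proof -
  have "odd_harmonic n \<le> (\<Sum>j=1..n. 1)"
    unfolding odd_harmonic_def by (intro sum_mono) auto
  then show ?thesis
    by simp
qed

lemma central_binomial_odd_harmonic_Suc:
  "real (Suc n) * (real (2 * Suc n choose Suc n) * odd_harmonic (Suc n))
     = (4 * real n + 2) * (real (2 * n choose n) * odd_harmonic n) + 2 * real (2 * n choose n)"
proof -
  have "real (Suc n) * (real (2 * Suc n choose Suc n) * odd_harmonic (Suc n))
      = (4 * real n + 2) * real (2 * n choose n) * (odd_harmonic n + 1 / (2 * real n + 1))"
    by (simp only: mult.assoc[symmetric] central_binomial_Suc_real odd_harmonic_Suc)
  also have "\<dots> = (4 * real n + 2) * (real (2 * n choose n) * odd_harmonic n)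
      + 2 * real (2 * n choose n)"
    by (simp add: field_simps)
  finally show ?thesis .
qed

lemma alternating_binomial_sum:
  fixes w :: real
  shows "real m * (\<Sum>j=0..<m. (-1) ^ j * real (m - 1 choose j) * w ^ j) = real m * (1 - w) ^ (m - 1)"
proof (cases m)
  case (Suc k)
  have "(1 - w) ^ k = (\<Sum>j\<le>k. real (k choose j) * (- w) ^ j * 1 ^ (k - j))"
    using binomial_ring[of "- w" 1 k] by simp
  also have "\<dots> = (\<Sum>j=0..<Suc k. (-1) ^ j * real (k choose j) * w ^ j)"
    by (rule sum.cong) (auto simp: power_minus[of w])
  finally show ?thesis
    using Suc by simp
qed simp

lemma summable_powser_bounded_by_Suc_four_pow:
  fixes a :: "nat \<Rightarrow> real"
  assumes bound: "\<And>n. \<bar>a n\<bar> \<le> real (Suc n) * 4 ^ n" and y: "\<bar>y\<bar> < 1/4"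
  shows "summable (\<lambda>n. a n * y ^ n)"
proof (rule summable_comparison_test)
  have "summable (\<lambda>n. diffs (\<lambda>_. 1) n * (4 * \<bar>y\<bar>) ^ n)"
    by (rule termdiff_converges[where K = 1]) (use y in \<open>auto intro: summable_geometric\<close>)
  then show "summable (\<lambda>n. real (Suc n) * (4 * \<bar>y\<bar>) ^ n)"
    by (simp add: diffs_def)
  show "\<exists>N. \<forall>n\<ge>N. norm (a n * y ^ n) \<le> real (Suc n) * (4 * \<bar>y\<bar>) ^ n"
    using mult_right_mono[OF bound, of "\<bar>y\<bar> ^ _"]
    by (auto simp: abs_mult power_abs power_mult_distrib mult.assoc)
qed

lemma sums_of_nat_times_powser:
  fixes a :: "nat \<Rightarrow> 'a::real_normed_field"
  assumes "summable (\<lambda>n. diffs a n * y ^ n)"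
  shows "(\<lambda>n. of_nat n * a n * y ^ n) sums (y * (\<Sum>n. diffs a n * y ^ n))"
proof -
  have "(\<lambda>n. y * (diffs a n * y ^ n)) sums (y * (\<Sum>n. diffs a n * y ^ n))"
    using assms by (intro sums_mult summable_sums)
  then have "(\<lambda>n. of_nat (Suc n) * a (Suc n) * y ^ Suc n) sums (y * (\<Sum>n. diffs a n * y ^ n))"
    by (simp add: diffs_def algebra_simps)
  then show ?thesis
    by (subst (asm) sums_Suc_iff) simp
qed

lemma has_real_derivative_powser_times_sqrt:
  fixes a b :: "nat \<Rightarrow> real"
  assumes rec: "\<And>n. real (Suc n) * a (Suc n) = (4 * real n + 2) * a n + b n"
    and summable_a: "\<And>z. \<bar>z\<bar> < 1/4 \<Longrightarrow> summable (\<lambda>n. a n * z ^ n)"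
    and summable_b: "\<And>z. \<bar>z\<bar> < 1/4 \<Longrightarrow> summable (\<lambda>n. b n * z ^ n)"
    and y: "\<bar>y\<bar> < 1/4"
  shows "((\<lambda>y. (\<Sum>n. a n * y ^ n) * sqrt (1 - 4*y)) has_real_derivative
           (\<Sum>n. b n * y ^ n) / sqrt (1 - 4*y)) (at y)"
proof -
  define A B D where "A = (\<Sum>n. a n * y ^ n)" and "B = (\<Sum>n. b n * y ^ n)"
    and "D = (\<Sum>n. diffs a n * y ^ n)"
  have summable_D: "summable (\<lambda>n. diffs a n * y ^ n)"
    using y summable_a by (intro termdiff_converges[where K = "1/4"]) auto
  have "(\<lambda>n. 4 * (of_nat n * a n * y ^ n) + 2 * (a n * y ^ n) + b n * y ^ n)
      sums (4 * (y * D) + 2 * A + B)"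
    unfolding A_def B_def D_def
    by (intro sums_add sums_mult sums_of_nat_times_powser summable_D summable_sums summable_a summable_b y)
  moreover have "(\<lambda>n. 4 * (of_nat n * a n * y ^ n) + 2 * (a n * y ^ n) + b n * y ^ n)
      = (\<lambda>n. diffs a n * y ^ n)"
    using rec by (simp add: diffs_def algebra_simps)
  ultimately have ode: "(1 - 4*y) * D = 2 * A + B"
    using summable_D unfolding D_def by (simp add: sums_iff algebra_simps)
  have "((\<lambda>y. (\<Sum>n. a n * y ^ n)) has_real_derivative D) (at y)"
    unfolding D_def using y summable_a by (intro termdiffs_strong'[where K = "1/4"]) auto
  then have "((\<lambda>y. (\<Sum>n. a n * y ^ n) * sqrt (1 - 4*y)) has_real_derivative
      D * sqrt (1 - 4*y) + A * (inverse (sqrt (1 - 4*y)) / 2 * (- 4))) (at y)"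
    unfolding A_def using y by (auto intro!: derivative_eq_intros)
  moreover have "D * sqrt (1 - 4*y) + A * (inverse (sqrt (1 - 4*y)) / 2 * (- 4)) = B / sqrt (1 - 4*y)"
    using y ode by (simp add: field_simps)
  ultimately show ?thesis
    unfolding B_def by simp
qed

lemma summable_powser_div_index:
  fixes a :: "nat \<Rightarrow> real"
  assumes summable_a: "\<And>z. \<bar>z\<bar> < r \<Longrightarrow> summable (\<lambda>n. a n * z ^ n)"
    and y: "\<bar>y\<bar> < r"
  shows "summable (\<lambda>k. a k / real (k + m + 1) * y ^ k)"
proof (rule summable_comparison_test)
  have "summable (\<lambda>k. a k * ((\<bar>y\<bar> + r) / 2) ^ k)"
    using y by (intro summable_a) auto
  then show "summable (\<lambda>k. norm (a k * y ^ k))"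
    by (rule powser_insidea) (use y in auto)
  have "norm (a k / real (k + m + 1) * y ^ k) \<le> norm (a k * y ^ k)" for k
    using mult_left_mono[of 1 "real (k + m + 1)" "norm (a k * y ^ k)"]
    by (simp add: abs_mult divide_le_eq)
  then show "\<exists>N. \<forall>k\<ge>N. norm (a k / real (k + m + 1) * y ^ k) \<le> norm (a k * y ^ k)"
    by blast
qed

lemma has_real_derivative_powser_antiderivative:
  fixes a :: "nat \<Rightarrow> real"
  assumes summable_a: "\<And>z. \<bar>z\<bar> < r \<Longrightarrow> summable (\<lambda>n. a n * z ^ n)"
    and y: "\<bar>y\<bar> < r"
  shows "((\<lambda>y. y ^ (m + 1) * (\<Sum>k. a k / real (k + m + 1) * y ^ k)) has_real_derivative
           y ^ m * (\<Sum>k. a k * y ^ k)) (at y)"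
proof -
  define d where "d k = a k / real (k + m + 1)" for k
  have summable_d: "summable (\<lambda>k. d k * z ^ k)" if "\<bar>z\<bar> < r" for z
    unfolding d_def using summable_a that by (rule summable_powser_div_index)
  define D D' where "D = (\<Sum>k. d k * y ^ k)" and "D' = (\<Sum>k. diffs d k * y ^ k)"
  have summable_D': "summable (\<lambda>k. diffs d k * y ^ k)"
    using y summable_d by (intro termdiff_converges[where K = r]) auto
  have "((\<lambda>y. y ^ (m + 1)) has_real_derivative real (m + 1) * y ^ m) (at y)"
    using DERIV_pow[of "m + 1" y] by simp
  moreover have "((\<lambda>y. \<Sum>k. d k * y ^ k) has_real_derivative D') (at y)"
    unfolding D'_def using y summable_d by (intro termdiffs_strong'[where K = r]) auto
  ultimately have "((\<lambda>y. y ^ (m + 1) * (\<Sum>k. d k * y ^ k)) has_real_derivative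
      real (m + 1) * y ^ m * D + D' * y ^ (m + 1)) (at y)"
    unfolding D_def by (rule DERIV_mult)
  moreover have "(\<lambda>k. real (m + 1) * (d k * y ^ k) + real k * d k * y ^ k)
      sums (real (m + 1) * D + y * D')"
    unfolding D_def D'_def
    by (intro sums_add sums_mult summable_sums summable_d y sums_of_nat_times_powser summable_D')
  moreover have "real (m + 1) * (d k * y ^ k) + real k * d k * y ^ k = a k * y ^ k" for k
  proof -
    have "real (m + 1) * (d k * y ^ k) + real k * d k * y ^ k = real (k + m + 1) * d k * y ^ k"
      by (simp add: algebra_simps)
    then show ?thesis
      by (simp add: d_def)
  qed
  ultimately show ?thesis
    unfolding d_def by (simp add: sums_iff algebra_simps)
qed

lemma summable_central_binomial_powser:
  "\<bar>y\<bar> < 1/4 \<Longrightarrow> summable (\<lambda>n. real (2 * n choose n) * y ^ n)"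
proof (rule summable_powser_bounded_by_Suc_four_pow)
  fix n
  have "real (2 * n choose n) \<le> 4 ^ n"
    using central_binomial_le_four_pow[of n] by (simp flip: of_nat_le_iff)
  also have "\<dots> \<le> real (Suc n) * 4 ^ n"
    by simp
  finally show "\<bar>real (2 * n choose n)\<bar> \<le> real (Suc n) * 4 ^ n"
    by simp
qed

lemma summable_central_binomial_odd_harmonic_powser:
  "\<bar>y\<bar> < 1/4 \<Longrightarrow> summable (\<lambda>n. real (2 * n choose n) * odd_harmonic n * y ^ n)"
proof (rule summable_powser_bounded_by_Suc_four_pow)
  fix n
  have "real (2 * n choose n) \<le> 4 ^ n"
    using central_binomial_le_four_pow[of n] by (simp flip: of_nat_le_iff)
  moreover have "odd_harmonic n \<le> real (Suc n)"
    using odd_harmonic_le[of n] by simp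
  ultimately show "\<bar>real (2 * n choose n) * odd_harmonic n\<bar> \<le> real (Suc n) * 4 ^ n"
    using odd_harmonic_nonneg[of n] by (simp add: abs_mult mult.commute mult_mono)
qed

lemma central_binomial_powser:
  assumes "\<bar>y\<bar> < 1/4"
  shows "(\<lambda>n. real (2 * n choose n) * y ^ n) sums (1 / sqrt (1 - 4*y))"
proof -
  define f where "f y = (\<Sum>n. real (2 * n choose n) * y ^ n) * sqrt (1 - 4*y)" for y
  have "(f has_real_derivative 0) (at z)" if "z \<in> {-1/4<..<1/4}" for z
    using has_real_derivative_powser_times_sqrt[where b = "\<lambda>_. 0",
        OF central_binomial_Suc_real[THEN trans] summable_central_binomial_powser, of z] that
    unfolding f_def by auto
  then have "f y = f 0"
    using assms by (intro DERIV_isconst3[of "-1/4" "1/4"]) auto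
  also have "f 0 = 1"
    by (simp add: f_def)
  finally have "(\<Sum>n. real (2 * n choose n) * y ^ n) = 1 / sqrt (1 - 4*y)"
    using assms by (simp add: f_def field_simps)
  then show ?thesis
    using summable_central_binomial_powser[OF assms] by (simp add: sums_iff)
qed

lemma has_real_derivative_central_binomial_odd_harmonic_times_sqrt:
  assumes y: "\<bar>y\<bar> < 1/4"
  shows "((\<lambda>y. (\<Sum>n. real (2 * n choose n) * odd_harmonic n * y ^ n) * sqrt (1 - 4*y))
           has_real_derivative 2 / (1 - 4*y)) (at y)"
proof -
  have summable_b: "summable (\<lambda>n. 2 * real (2 * n choose n) * z ^ n)" if "\<bar>z\<bar> < 1/4" for z
    using summable_mult[OF summable_central_binomial_powser[OF that], of 2] by (simp add: mult.assoc)
  have "(\<lambda>n. 2 * (real (2 * n choose n) * y ^ n)) sums (2 * (1 / sqrt (1 - 4*y)))"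
    using y by (intro sums_mult central_binomial_powser)
  then have "(\<Sum>n. 2 * real (2 * n choose n) * y ^ n) = 2 / sqrt (1 - 4*y)"
    by (simp add: sums_iff mult.assoc)
  then have "((\<lambda>y. (\<Sum>n. real (2 * n choose n) * odd_harmonic n * y ^ n) * sqrt (1 - 4*y))
      has_real_derivative (2 / sqrt (1 - 4*y)) / sqrt (1 - 4*y)) (at y)"
    using has_real_derivative_powser_times_sqrt[where a = "\<lambda>n. real (2 * n choose n) * odd_harmonic n"
        and b = "\<lambda>n. 2 * real (2 * n choose n)", OF central_binomial_odd_harmonic_Suc
        summable_central_binomial_odd_harmonic_powser summable_b y]
    by simp
  then show ?thesis
    using y by simp
qed

lemma central_binomial_odd_harmonic_powser:
  assumes "\<bar>y\<bar> < 1/4"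
  shows "(\<lambda>n. real (2 * n choose n) * odd_harmonic n * y ^ n)
           sums (- ln (1 - 4*y) / (2 * sqrt (1 - 4*y)))"
proof -
  define f where "f y = (\<Sum>n. real (2 * n choose n) * odd_harmonic n * y ^ n) * sqrt (1 - 4*y)
    + ln (1 - 4*y) / 2" for y
  have "(f has_real_derivative 0) (at z)" if z: "z \<in> {-1/4<..<1/4}" for z
  proof -
    have "((\<lambda>y. ln (1 - 4*y) / 2) has_real_derivative - 2 / (1 - 4*z)) (at z)"
      using z by (auto intro!: derivative_eq_intros simp: field_simps)
    then have "(f has_real_derivative 2 / (1 - 4*z) + - 2 / (1 - 4*z)) (at z)"
      unfolding f_def[abs_def] using z
      by (intro DERIV_add has_real_derivative_central_binomial_odd_harmonic_times_sqrt) auto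
    then show ?thesis
      by simp
  qed
  then have "f y = f 0"
    using assms by (intro DERIV_isconst3[of "-1/4" "1/4"]) auto
  also have "f 0 = 0"
    by (simp add: f_def)
  finally have "(\<Sum>n. real (2 * n choose n) * odd_harmonic n * y ^ n)
      = - ln (1 - 4*y) / (2 * sqrt (1 - 4*y))"
    using assms by (simp add: f_def field_simps)
  then show ?thesis
    using summable_central_binomial_odd_harmonic_powser[OF assms] by (simp add: sums_iff)
qed

definition A_root :: "nat \<Rightarrow> real \<Rightarrow> real" where
  "A_root j u = u ^ (2*j+3) / (2 * real j + 3) * (ln u - (2 * real j + 4) / (2 * real j + 3))
    + (2 * real j + 4) / (2 * real j + 3)^2"

lemma A_term_eq_A_root:
  assumes "x < 1/4"
  shows "A_term j x = A_root j (sqrt (1 - 4*x))"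
proof -
  have "sqrt (1 - 4*x) ^ (2*j+3) = ((1 - 4*x) powr (1/2)) ^ (2*j+3)"
    using assms by (simp add: powr_half_sqrt)
  also have "\<dots> = (1 - 4*x) powr (real (2*j+3) * (1/2))"
    using assms by (simp add: powr_power)
  also have "real (2*j+3) * (1/2) = real j + 3/2"
    by simp
  finally show ?thesis
    unfolding A_term_def A_root_def by simp
qed

lemma A_root_1 [simp]: "A_root j 1 = 0"
  by (simp add: A_root_def field_simps power2_eq_square)

lemma has_real_derivative_A_root:
  assumes "0 < u"
  shows "(A_root j has_real_derivative u ^ (2*j+2) * (ln u - 1)) (at u)"
proof -
  have "u ^ (2*j+3) = u * u ^ (2*j+2)"
    by (simp add: numeral_3_eq_3)
  then show ?thesis
    unfolding A_root_def[abs_def] using assms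
    by (auto intro!: derivative_eq_intros simp: divide_simps) (simp add: algebra_simps)
qed

lemma has_real_derivative_A_root_sum:
  assumes "0 < u"
  shows "((\<lambda>u. real m / 4 ^ m * (\<Sum>j=0..<m. (-1) ^ j * real (m - 1 choose j) * A_root j u))
           has_real_derivative real m / 4 ^ m * u\<^sup>2 * (1 - u\<^sup>2) ^ (m - 1) * (ln u - 1)) (at u)"
proof -
  define S where "S = (\<Sum>j=0..<m. (-1) ^ j * real (m - 1 choose j) * (u\<^sup>2) ^ j)"
  have "u ^ (2*j+2) = u\<^sup>2 * (u\<^sup>2) ^ j" for j
    by (metis power_add power_mult mult.commute)
  then have factor: "(\<Sum>j=0..<m. (-1) ^ j * real (m - 1 choose j) * (u ^ (2*j+2) * (ln u - 1)))
      = u\<^sup>2 * (ln u - 1) * S"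
    by (simp add: S_def sum_distrib_left mult_ac)
  have "real m / 4 ^ m * (u\<^sup>2 * (ln u - 1) * S) = u\<^sup>2 * (ln u - 1) / 4 ^ m * (real m * S)"
    by simp
  then have collapse: "real m / 4 ^ m * (u\<^sup>2 * (ln u - 1) * S)
      = real m / 4 ^ m * u\<^sup>2 * (1 - u\<^sup>2) ^ (m - 1) * (ln u - 1)"
    unfolding S_def alternating_binomial_sum by simp
  have "((\<lambda>u. real m / 4 ^ m * (\<Sum>j=0..<m. (-1) ^ j * real (m - 1 choose j) * A_root j u))
      has_real_derivative
        real m / 4 ^ m * (\<Sum>j=0..<m. (-1) ^ j * real (m - 1 choose j) * (u ^ (2*j+2) * (ln u - 1))))
      (at u)"
    using assms by (intro DERIV_cmult DERIV_sum has_real_derivative_A_root)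
  then show ?thesis
    unfolding factor collapse .
qed

definition primitive_closed_form :: "nat \<Rightarrow> real \<Rightarrow> real" where
  "primitive_closed_form m y = y ^ m * (sqrt (1 - 4*y) / 2 * (ln (sqrt (1 - 4*y)) - 1)) + 0 ^ m / 2
    + real m / 4 ^ m * (\<Sum>j=0..<m. (-1) ^ j * real (m - 1 choose j) * A_root j (sqrt (1 - 4*y)))"

lemma primitive_closed_form_0 [simp]: "primitive_closed_form m 0 = 0"
  by (simp add: primitive_closed_form_def)

lemma has_real_derivative_primitive_closed_form:
  assumes y: "y < 1/4"
  shows "(primitive_closed_form m has_real_derivative
           y ^ m * (- ln (1 - 4*y) / (2 * sqrt (1 - 4*y)))) (at y)"
proof -
  define u where "u = sqrt (1 - 4*y)"
  have u: "0 < u" "u\<^sup>2 = 1 - 4*y" "ln (1 - 4*y) = 2 * ln u"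
    using y by (simp_all add: u_def ln_sqrt)
  have du: "((\<lambda>y. sqrt (1 - 4*y)) has_real_derivative - 2 / u) (at y)"
    using y by (auto intro!: derivative_eq_intros simp: u_def field_simps)
  have psi: "((\<lambda>v. v / 2 * (ln v - 1)) has_real_derivative ln u / 2) (at u)"
    using u by (auto intro!: derivative_eq_intros simp: field_simps)
  have d1: "((\<lambda>y. y ^ m * (sqrt (1 - 4*y) / 2 * (ln (sqrt (1 - 4*y)) - 1))) has_real_derivative
      y ^ m * (ln u / 2 * (- 2 / u)) + real m * y ^ (m - 1) * (u / 2 * (ln u - 1))) (at y)"
    using DERIV_mult'[OF DERIV_pow DERIV_chain2[OF psi[unfolded u_def] du[unfolded u_def]]]
    by (simp add: u_def)
  have d2: "((\<lambda>y. real m / 4 ^ m *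
        (\<Sum>j=0..<m. (-1) ^ j * real (m - 1 choose j) * A_root j (sqrt (1 - 4*y))))
      has_real_derivative real m / 4 ^ m * u\<^sup>2 * (1 - u\<^sup>2) ^ (m - 1) * (ln u - 1) * (- 2 / u)) (at y)"
    using DERIV_chain2[OF has_real_derivative_A_root_sum[OF u(1), unfolded u_def] du[unfolded u_def]]
    by (simp add: u_def)
  have deriv: "(primitive_closed_form m has_real_derivative
      y ^ m * (ln u / 2 * (- 2 / u)) + real m * y ^ (m - 1) * (u / 2 * (ln u - 1)) + 0
      + real m / 4 ^ m * u\<^sup>2 * (1 - u\<^sup>2) ^ (m - 1) * (ln u - 1) * (- 2 / u)) (at y)"
    unfolding primitive_closed_form_def[abs_def] by (intro DERIV_add d1 d2 DERIV_const)
  have cancel: "real m / 4 ^ m * u\<^sup>2 * (1 - u\<^sup>2) ^ (m - 1) * (ln u - 1) * (- 2 / u)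
      = - (real m * y ^ (m - 1) * (u / 2 * (ln u - 1)))"
  proof -
    have pow: "real m / 4 ^ m * (1 - u\<^sup>2) ^ (m - 1) = real m / 4 * y ^ (m - 1)"
      by (cases m) (simp_all add: u(2) power_mult_distrib)
    have "real m / 4 ^ m * u\<^sup>2 * (1 - u\<^sup>2) ^ (m - 1) * (ln u - 1) * (- 2 / u)
        = (real m / 4 ^ m * (1 - u\<^sup>2) ^ (m - 1)) * (u\<^sup>2 * (ln u - 1) * (- 2 / u))"
      by (simp only: mult_ac)
    also have "\<dots> = real m / 4 * y ^ (m - 1) * (u\<^sup>2 * (ln u - 1) * (- 2 / u))"
      by (simp only: pow)
    also have "\<dots> = - (real m * y ^ (m - 1) * (u / 2 * (ln u - 1)))"
      using u(1) by (simp add: power2_eq_square field_simps)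
    finally show ?thesis .
  qed
  have "y ^ m * (ln u / 2 * (- 2 / u)) = y ^ m * (- ln (1 - 4*y) / (2 * sqrt (1 - 4*y)))"
    using u(1) by (simp add: u(3) flip: u_def)
  with cancel deriv show ?thesis
    by (simp add: DERIV_cong)
qed

lemma primitive_closed_form_div_pow:
  assumes "x \<noteq> 0" and "x < 1/4"
  shows "primitive_closed_form m x / x ^ (m + 1) =
    sqrt (1 - 4*x) / (2*x) * (ln (sqrt (1 - 4*x)) - 1)
     + (0::real) ^ m / (2 * x ^ (m + 1))
     + real m / (4 ^ m * x ^ (m + 1)) *
         (\<Sum>j=0..<m. (-1) ^ j * real ((m - 1) choose j) * A_term j x)"
  unfolding primitive_closed_form_def A_term_eq_A_root[OF assms(2)] using assms(1)
  by (simp add: field_simps)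

lemma central_binomial_odd_harmonic_antiderivative:
  assumes "\<bar>y\<bar> < 1/4"
  shows "y ^ (m + 1) * (\<Sum>n. real (2 * n choose n) * odd_harmonic n / real (n + m + 1) * y ^ n)
           = primitive_closed_form m y"
proof -
  define H where
    "H y = y ^ (m + 1) * (\<Sum>n. real (2 * n choose n) * odd_harmonic n / real (n + m + 1) * y ^ n)" for y
  have "((\<lambda>y. H y - primitive_closed_form m y) has_real_derivative 0) (at z)"
    if z: "z \<in> {-1/4<..<1/4}" for z
  proof -
    have "(H has_real_derivative z ^ m * (\<Sum>n. real (2 * n choose n) * odd_harmonic n * z ^ n)) (at z)"
      unfolding H_def[abs_def] using z summable_central_binomial_odd_harmonic_powser
      by (intro has_real_derivative_powser_antiderivative[where r = "1/4"]) auto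
    moreover have "(\<Sum>n. real (2 * n choose n) * odd_harmonic n * z ^ n)
        = - ln (1 - 4*z) / (2 * sqrt (1 - 4*z))"
      using z by (intro sums_unique[symmetric] central_binomial_odd_harmonic_powser) auto
    ultimately have "((\<lambda>y. H y - primitive_closed_form m y) has_real_derivative
        z ^ m * (- ln (1 - 4*z) / (2 * sqrt (1 - 4*z)))
        - z ^ m * (- ln (1 - 4*z) / (2 * sqrt (1 - 4*z)))) (at z)"
      using z by (intro DERIV_diff has_real_derivative_primitive_closed_form) auto
    then show ?thesis
      by simp
  qed
  then have "H y - primitive_closed_form m y = H 0 - primitive_closed_form m 0"
    using assms by (intro DERIV_isconst3[of "-1/4" "1/4"]) auto
  then show ?thesis
    by (simp add: H_def)
qed

theorem theorem22:
  fixes m :: nat and x :: real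
  assumes "0 < \<bar>x\<bar>" and "\<bar>x\<bar> < 1/4"
  shows "(\<lambda>n. real ((2*n) choose n) * odd_harmonic n / real (n + m + 1) * x ^ n) sums
    (sqrt (1 - 4*x) / (2*x) * (ln (sqrt (1 - 4*x)) - 1)
     + (0::real) ^ m / (2 * x ^ (m + 1))
     + real m / (4 ^ m * x ^ (m + 1)) *
         (\<Sum>j=0..<m. (-1) ^ j * real ((m - 1) choose j) * A_term j x))"
proof -
  have x: "x \<noteq> 0" "x < 1/4"
    using assms by auto
  have "(\<Sum>n. real (2 * n choose n) * odd_harmonic n / real (n + m + 1) * x ^ n)
      = primitive_closed_form m x / x ^ (m + 1)"
    using central_binomial_odd_harmonic_antiderivative[OF assms(2), of m] x(1)
    by (simp add: field_simps)
  also have "\<dots> = sqrt (1 - 4*x) / (2*x) * (ln (sqrt (1 - 4*x)) - 1)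
     + (0::real) ^ m / (2 * x ^ (m + 1))
     + real m / (4 ^ m * x ^ (m + 1)) *
         (\<Sum>j=0..<m. (-1) ^ j * real ((m - 1) choose j) * A_term j x)"
    using x by (rule primitive_closed_form_div_pow)
  finally have "(\<Sum>n. real (2 * n choose n) * odd_harmonic n / real (n + m + 1) * x ^ n) = \<dots>" .
  moreover have "summable (\<lambda>n. real (2 * n choose n) * odd_harmonic n / real (n + m + 1) * x ^ n)"
    using summable_central_binomial_odd_harmonic_powser assms(2) by (rule summable_powser_div_index)
  ultimately show ?thesis
    unfolding sums_iff by blast
qed

end
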